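(* Let $n\ge1$, $1\le m\le n$, and let $T$ be the tree with vertex set $\{x_0,x_1,\dots,x_n,y_1,\dots,y_m\}$ and edge set $\{\{x_0,x_i\}:1\le i\le n\}\cup\{\{x_i,y_i\}:1\le i\le m\}$. Let $S=\Bbbk[x_0,\dots,x_n,y_1,\dots,y_m]$ ($\Bbbk$ a field), ordered by the reverse lexicographic order with $x_0>x_1>\dots>x_n>y_1>\dots>y_m$, and write the minimal monomial generators of $I(T^2)$ as $u_1>_{revlex}u_2>_{revlex}\dots>_{revlex}u_N$. (These generators are $x_ax_b$ for $0\le a<b\le n$, $x_0y_b$ for $1\le b\le m$, and $x_ay_a$ for $1\le a\le m$.) Then for all $2\le i\le N$: $$\langle u_1,\dots,u_{i-1}\rangle:\langle u_i\rangle=\begin{cases}\langle x_0,\dots,\widehat{x_a},\dots,x_{b-1}\rangle, & u_i=x_ax_b,\ 0\le a<b\le n,\\ \langle x_1,\dots,x_n,y_1,\dots,y_{b-1}\rangle, & u_i=x_0y_b,\ 1\le b\le m,\\ \langle x_0,\dots,\widehat{x_a},\dots,x_n\rangle, & u_i=x_ay_a,\ 1\le a\le m,\end{cases}$$ where $\widehat{x_a}$ means $x_a$ is omitted. In particular $I(T^2)$ has linear quotients with respect to this order.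
   Context: The square $T^2$ of a graph $T$ is the graph on $V(T)$ with edges the pairs at distance 1 or 2 in $T$. The edge ideal is $I(G)=\langle x_ux_v:\{u,v\}\in E(G)\rangle$, identifying vertices with variables. Reverse lexicographic order: for monomials $u=\prod z_k^{a_k}$, $v=\prod z_k^{b_k}$ in variables $z_1>\dots>z_r$, $u>_{revlex}v$ if $\deg u>\deg v$, or $\deg u=\deg v$ and for some $s$ one has $a_r=b_r,\dots,a_{s+1}=b_{s+1}$ and $a_s<b_s$. A monomial ideal with ordered minimal generators $u_1,\dots,u_N$ has linear quotients if each colon ideal $\langle u_1,\dots,u_{j-1}\rangle:\langle u_j\rangle$, $2\le j\le N$, is generated by variables. *)

theory Defs
  imports Main
begin

datatype var = X nat | Y nat

definition verts :: "nat \<Rightarrow> nat \<Rightarrow> var set" where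
  "verts n m = {X i | i. i \<le> n} \<union> {Y i | i. 1 \<le> i \<and> i \<le> m}"

definition tree_edge :: "nat \<Rightarrow> nat \<Rightarrow> var \<Rightarrow> var \<Rightarrow> bool" where
  "tree_edge n m u v \<longleftrightarrow>
     (\<exists>i. 1 \<le> i \<and> i \<le> n \<and> ({u, v} = {X 0, X i})) \<or>
     (\<exists>i. 1 \<le> i \<and> i \<le> m \<and> ({u, v} = {X i, Y i}))"

definition sq_edge :: "nat \<Rightarrow> nat \<Rightarrow> var \<Rightarrow> var \<Rightarrow> bool" where
  "sq_edge n m u v \<longleftrightarrow> u \<in> verts n m \<and> v \<in> verts n m \<and> u \<noteq> v \<and>
     (tree_edge n m u v \<or> (\<exists>w \<in> verts n m. tree_edge n m u w \<and> tree_edge n m w v))"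

text \<open>Monomials of S = k[verts] as exponent vectors supported on the variables.\<close>
type_synonym monomial = "var \<Rightarrow> nat"

definition monoms :: "nat \<Rightarrow> nat \<Rightarrow> monomial set" where
  "monoms n m = {w. \<forall>z. z \<notin> verts n m \<longrightarrow> w z = 0}"

definition mdvd :: "monomial \<Rightarrow> monomial \<Rightarrow> bool" where
  "mdvd u w \<longleftrightarrow> (\<forall>z. u z \<le> w z)"

definition mmult :: "monomial \<Rightarrow> monomial \<Rightarrow> monomial" where
  "mmult u w = (\<lambda>z. u z + w z)"

definition varmono :: "var \<Rightarrow> monomial" where
  "varmono v = (\<lambda>z. if z = v then 1 else 0)"

text \<open>A monomial ideal is determined by the monomials it contains; the monomial ideal
  generated by a set G of monomials contains exactly the monomials divisible by some g in G.\<close>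
definition monideal :: "nat \<Rightarrow> nat \<Rightarrow> monomial set \<Rightarrow> monomial set" where
  "monideal n m G = {w \<in> monoms n m. \<exists>g \<in> G. mdvd g w}"

definition colon :: "nat \<Rightarrow> nat \<Rightarrow> monomial set \<Rightarrow> monomial \<Rightarrow> monomial set" where
  "colon n m I u = {w \<in> monoms n m. mmult w u \<in> I}"

definition edge_ideal_sq :: "nat \<Rightarrow> nat \<Rightarrow> monomial set" where
  "edge_ideal_sq n m =
     monideal n m {mmult (varmono u) (varmono v) | u v. sq_edge n m u v}"

definition min_gens :: "monomial set \<Rightarrow> monomial set" where
  "min_gens I = {w \<in> I. \<forall>w' \<in> I. mdvd w' w \<longrightarrow> w' = w}"

text \<open>Reverse lexicographic order with x_0 > ... > x_n > y_1 > ... > y_m: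
  the variable of rank k is z_{k+1} in the paper's indexing (rank 0 largest).\<close>
definition rank :: "nat \<Rightarrow> var \<Rightarrow> nat" where
  "rank n v = (case v of X i \<Rightarrow> i | Y i \<Rightarrow> n + i)"

definition mdeg :: "nat \<Rightarrow> nat \<Rightarrow> monomial \<Rightarrow> nat" where
  "mdeg n m w = (\<Sum>z \<in> verts n m. w z)"

definition revlex_gt :: "nat \<Rightarrow> nat \<Rightarrow> monomial \<Rightarrow> monomial \<Rightarrow> bool" where
  "revlex_gt n m u v \<longleftrightarrow> mdeg n m u > mdeg n m v \<or>
     (mdeg n m u = mdeg n m v \<and>
      (\<exists>s \<in> verts n m. (\<forall>z \<in> verts n m. rank n z > rank n s \<longrightarrow> u z = v z) \<and> u s < v s))"

text \<open>Linear quotients for an ordered list of generators (0-indexed).\<close>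
definition linear_quotients :: "nat \<Rightarrow> nat \<Rightarrow> monomial list \<Rightarrow> bool" where
  "linear_quotients n m us \<longleftrightarrow>
     (\<forall>i. 1 \<le> i \<and> i < length us \<longrightarrow>
        (\<exists>C \<subseteq> verts n m. colon n m (monideal n m (set (take i us))) (us ! i)
                             = monideal n m (varmono ` C)))"

end

theory Submission
  imports Defs
begin

text \<open>The minimal generators of \<open>I(T\<^sup>2)\<close> are the squarefree quadrics listed in the
  statement, and on quadrics the reverse lexicographic order compares the later variable first
  and the earlier one second. An earlier generator \<open>g\<close> divides \<open>w u\<close> iff each variable of \<open>g\<close>
  lies in \<open>u\<close> or divides \<open>w\<close>. For each of the three shapes of \<open>u\<close> the variables of \<open>w\<close> that
  arise this way are exactly the generators of the stated ideal: an earlier generator meeting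
  \<open>u\<close> contributes its other variable, and an earlier generator disjoint from \<open>u\<close> always has a
  variable that already pairs with \<open>u\<close> into an earlier generator.\<close>

definition edge_mono :: "var \<Rightarrow> var \<Rightarrow> monomial" where
  "edge_mono p q = mmult (varmono p) (varmono q)"

lemma edge_mono_apply: "edge_mono p q z = (if z = p then 1 else 0) + (if z = q then 1 else 0)"
  by (simp add: edge_mono_def mmult_def varmono_def)

lemma edge_mono_commute: "edge_mono p q = edge_mono q p"
  by (auto simp: edge_mono_def mmult_def)

lemma X_in_verts [simp]: "X i \<in> verts n m \<longleftrightarrow> i \<le> n"
  by (auto simp: verts_def)

lemma Y_in_verts [simp]: "Y i \<in> verts n m \<longleftrightarrow> 1 \<le> i \<and> i \<le> m"
  by (auto simp: verts_def)

lemma rank_X [simp]: "rank n (X i) = i" and rank_Y [simp]: "rank n (Y i) = n + i"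
  by (auto simp: rank_def)

lemma inj_on_rank: "inj_on (rank n) (verts n m)"
  by (auto simp: inj_on_def rank_def verts_def)

lemma finite_verts: "finite (verts n m)"
proof (rule finite_subset)
  show "verts n m \<subseteq> X ` {..n} \<union> Y ` {..m}"
    by (auto simp: verts_def)
qed auto

lemma edge_mono_in_monoms: "p \<in> verts n m \<Longrightarrow> q \<in> verts n m \<Longrightarrow> edge_mono p q \<in> monoms n m"
  by (auto simp: monoms_def edge_mono_apply)

lemma mdeg_edge_mono: "p \<in> verts n m \<Longrightarrow> q \<in> verts n m \<Longrightarrow> mdeg n m (edge_mono p q) = 2"
  by (simp add: mdeg_def edge_mono_apply sum.distrib finite_verts)

subsection \<open>Divisibility\<close>

lemma mdvd_varmono_iff: "mdvd (varmono c) w \<longleftrightarrow> 1 \<le> w c"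
  by (auto simp: mdvd_def varmono_def)

lemma mdvd_edge_mono_iff: "p \<noteq> q \<Longrightarrow> mdvd (edge_mono p q) w \<longleftrightarrow> 1 \<le> w p \<and> 1 \<le> w q"
  by (auto simp: mdvd_def edge_mono_apply)

lemma mdvd_edge_mono_mmult_iff:
  "p' \<noteq> q' \<Longrightarrow> mdvd (edge_mono p' q') (mmult w (edge_mono p q)) \<longleftrightarrow>
     (p' \<in> {p, q} \<or> 1 \<le> w p') \<and> (q' \<in> {p, q} \<or> 1 \<le> w q')"
  by (auto simp: mdvd_def mmult_def edge_mono_apply)

lemma edge_mono_mdvd_edge_mono_imp_eq:
  "p \<noteq> q \<Longrightarrow> p' \<noteq> q' \<Longrightarrow> mdvd (edge_mono p' q') (edge_mono p q) \<Longrightarrow> edge_mono p' q' = edge_mono p q"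
  by (auto simp: mdvd_edge_mono_iff edge_mono_apply split: if_splits intro: edge_mono_commute)

lemma mdvd_antisym: "mdvd u w \<Longrightarrow> mdvd w u \<Longrightarrow> u = w"
  by (auto simp: mdvd_def intro: antisym)

lemma mdvd_trans: "mdvd u v \<Longrightarrow> mdvd v w \<Longrightarrow> mdvd u w"
  by (auto simp: mdvd_def intro: le_trans)

lemma min_gens_monideal:
  assumes "G \<subseteq> monoms n m" and antichain: "\<And>g g'. g \<in> G \<Longrightarrow> g' \<in> G \<Longrightarrow> mdvd g' g \<Longrightarrow> g' = g"
  shows "min_gens (monideal n m G) = G"
proof -
  have G_in: "G \<subseteq> monideal n m G"
    using assms(1) by (auto simp: monideal_def mdvd_def)
  have "w = g" if w: "w \<in> monideal n m G" "mdvd w g" and g: "g \<in> G" for w g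
  proof -
    obtain g' where "g' \<in> G" "mdvd g' w"
      using w(1) by (auto simp: monideal_def)
    with w(2) g have "g' = g"
      using antichain mdvd_trans by blast
    with \<open>mdvd g' w\<close> w(2) show ?thesis
      using mdvd_antisym by blast
  qed
  with G_in show ?thesis
    unfolding min_gens_def monideal_def by (auto dest: sym)
qed

lemma monideal_varmono_image: "monideal n m (varmono ` C) = {w \<in> monoms n m. \<exists>c\<in>C. 1 \<le> w c}"
  by (auto simp: monideal_def mdvd_varmono_iff)

lemma colon_monideal:
  "u \<in> monoms n m \<Longrightarrow> colon n m (monideal n m E) u = {w \<in> monoms n m. \<exists>g\<in>E. mdvd g (mmult w u)}"
  by (auto simp: colon_def monideal_def monoms_def mmult_def)

subsection \<open>The reverse lexicographic order\<close>

lemma revlex_gt_asym: "revlex_gt n m u v \<Longrightarrow> \<not> revlex_gt n m v u"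
proof
  assume uv: "revlex_gt n m u v" and vu: "revlex_gt n m v u"
  then have deg: "mdeg n m u = mdeg n m v"
    by (auto simp: revlex_gt_def)
  from uv deg obtain s where s: "s \<in> verts n m" "u s < v s"
    and above_s: "\<forall>z\<in>verts n m. rank n z > rank n s \<longrightarrow> u z = v z"
    by (auto simp: revlex_gt_def)
  from vu deg obtain t where t: "t \<in> verts n m" "v t < u t"
    and above_t: "\<forall>z\<in>verts n m. rank n z > rank n t \<longrightarrow> v z = u z"
    by (auto simp: revlex_gt_def)
  show False
  proof (cases "rank n s" "rank n t" rule: linorder_cases)
    case equal
    then have "s = t"
      using inj_on_rank s(1) t(1) by (metis inj_on_def)
    with s t show False by simp
  next
    case less
    with above_s t(1) have "u t = v t" by blast
    with t(2) show False by simp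
  next
    case greater
    with above_t s(1) have "v s = u s" by blast
    with s(2) show False by simp
  qed
qed

lemma revlex_gt_edge_mono_iff:
  assumes verts: "p \<in> verts n m" "q \<in> verts n m" "p' \<in> verts n m" "q' \<in> verts n m"
    and ranks: "rank n p < rank n q" "rank n p' < rank n q'"
  shows "revlex_gt n m (edge_mono p q) (edge_mono p' q') \<longleftrightarrow>
     rank n q < rank n q' \<or> (rank n q = rank n q' \<and> rank n p < rank n p')"
    (is "?gt \<longleftrightarrow> ?lex")
proof
  assume ?gt
  then obtain s where s: "s \<in> verts n m" "edge_mono p q s < edge_mono p' q' s"
    and above_s: "\<forall>z\<in>verts n m. rank n z > rank n s \<longrightarrow> edge_mono p q z = edge_mono p' q' z"
    using mdeg_edge_mono verts by (auto simp: revlex_gt_def)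
  have "s \<in> {p', q'}" "s \<noteq> p" "s \<noteq> q"
    using s(2) ranks by (auto simp: edge_mono_apply split: if_splits)
  moreover have "rank n s \<noteq> rank n p" "rank n s \<noteq> rank n q"
    using calculation inj_on_rank s(1) verts by (metis inj_on_def)+
  moreover have "rank n s < rank n p \<longrightarrow> p \<in> {p', q'}" "rank n s < rank n q \<longrightarrow> q \<in> {p', q'}"
    using above_s verts ranks by (auto simp: edge_mono_apply split: if_splits)
  ultimately show ?lex
    using ranks by auto
next
  assume ?lex
  have deg: "mdeg n m (edge_mono p q) = mdeg n m (edge_mono p' q')"
    using mdeg_edge_mono verts by simp
  show ?gt
  proof (cases "rank n q < rank n q'")
    case True
    then have "\<forall>z\<in>verts n m. rank n z > rank n q' \<longrightarrow> edge_mono p q z = edge_mono p' q' z"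
      and "edge_mono p q q' < edge_mono p' q' q'"
      using ranks by (auto simp: edge_mono_apply)
    with deg verts show ?thesis
      unfolding revlex_gt_def by blast
  next
    case False
    with \<open>?lex\<close> have "q = q'" "rank n p < rank n p'"
      using inj_on_rank verts by (auto simp: inj_on_def)
    then have "\<forall>z\<in>verts n m. rank n z > rank n p' \<longrightarrow> edge_mono p q z = edge_mono p' q' z"
      and "edge_mono p q p' < edge_mono p' q' p'"
      using ranks by (auto simp: edge_mono_apply)
    with deg verts show ?thesis
      unfolding revlex_gt_def by blast
  qed
qed

lemma set_take_sorted_wrt:
  assumes "sorted_wrt R xs" "i < length xs" and asym: "\<And>x y. R x y \<Longrightarrow> \<not> R y x"
  shows "set (take i xs) = {x \<in> set xs. R x (xs ! i)}"
proof (intro set_eqI iffI)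
  fix x assume "x \<in> set (take i xs)"
  then obtain j where "j < i" "x = xs ! j"
    using assms(2) by (auto simp: in_set_conv_nth)
  with assms(1,2) show "x \<in> {x \<in> set xs. R x (xs ! i)}"
    by (simp add: sorted_wrt_nth_less)
next
  fix x assume x: "x \<in> {x \<in> set xs. R x (xs ! i)}"
  then obtain j where j: "j < length xs" "x = xs ! j"
    by (auto simp: in_set_conv_nth)
  have "\<not> i \<le> j"
  proof
    assume "i \<le> j"
    then have "x = xs ! i \<or> R (xs ! i) x"
      using assms(1) j le_neq_implies_less sorted_wrt_nth_less by metis
    with x asym show False by blast
  qed
  with j show "x \<in> set (take i xs)"
    by (auto simp: in_set_conv_nth)
qed

subsection \<open>The generators of \<open>I(T\<^sup>2)\<close>\<close>

definition square_gens :: "nat \<Rightarrow> nat \<Rightarrow> monomial set" where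
  "square_gens n m =
     {edge_mono (X a) (X b) | a b. a < b \<and> b \<le> n} \<union>
     {edge_mono (X 0) (Y b) | b. 1 \<le> b \<and> b \<le> m} \<union>
     {edge_mono (X a) (Y a) | a. 1 \<le> a \<and> a \<le> m}"

lemma bex_square_gens_iff:
  "(\<exists>g\<in>square_gens n m. P g) \<longleftrightarrow>
     (\<exists>a b. a < b \<and> b \<le> n \<and> P (edge_mono (X a) (X b))) \<or>
     (\<exists>b. 1 \<le> b \<and> b \<le> m \<and> P (edge_mono (X 0) (Y b))) \<or>
     (\<exists>a. 1 \<le> a \<and> a \<le> m \<and> P (edge_mono (X a) (Y a)))"
  unfolding square_gens_def by blast

lemma square_gens_cases:
  assumes "g \<in> square_gens n m"
  obtains (X_X) a b where "a < b" "b \<le> n" "g = edge_mono (X a) (X b)"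
    | (X0_Y) b where "1 \<le> b" "b \<le> m" "g = edge_mono (X 0) (Y b)"
    | (X_Y) a where "1 \<le> a" "a \<le> m" "g = edge_mono (X a) (Y a)"
  using assms unfolding square_gens_def by blast

lemma square_gens_edge_mono:
  assumes "m \<le> n" "g \<in> square_gens n m"
  obtains p q where "g = edge_mono p q" "p \<noteq> q" "p \<in> verts n m" "q \<in> verts n m"
  using assms(2)
proof (cases rule: square_gens_cases)
  case (X_X a b)
  then show ?thesis by (intro that) auto
next
  case (X0_Y b)
  then show ?thesis using assms(1) by (intro that) auto
next
  case (X_Y a)
  then show ?thesis using assms(1) by (intro that) auto
qed

lemma edge_mono_in_square_gens:
  "m \<le> n \<Longrightarrow> sq_edge n m u v \<Longrightarrow> edge_mono u v \<in> square_gens n m"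
  unfolding sq_edge_def tree_edge_def square_gens_def
  apply (elim conjE disjE exE bexE)
   apply (auto simp: doubleton_eq_iff edge_mono_commute)
  apply (metis edge_mono_commute linorder_neqE_nat)
  done

lemma tree_edge_sym: "tree_edge n m u v \<Longrightarrow> tree_edge n m v u"
  unfolding tree_edge_def by (metis insert_commute)

lemma tree_edge_X0_X: "1 \<le> b \<Longrightarrow> b \<le> n \<Longrightarrow> tree_edge n m (X 0) (X b)"
  unfolding tree_edge_def by blast

lemma tree_edge_X_Y: "1 \<le> a \<Longrightarrow> a \<le> m \<Longrightarrow> tree_edge n m (X a) (Y a)"
  unfolding tree_edge_def by blast

lemma square_gens_sq_edge:
  assumes "m \<le> n" "g \<in> square_gens n m"
  obtains u v where "g = edge_mono u v" "sq_edge n m u v"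
  using assms(2)
proof (cases rule: square_gens_cases)
  case (X_X a b)
  have "sq_edge n m (X a) (X b)"
  proof (cases "a = 0")
    case True
    with X_X show ?thesis
      unfolding sq_edge_def using tree_edge_X0_X by simp
  next
    case False
    with X_X have "tree_edge n m (X a) (X 0)" "tree_edge n m (X 0) (X b)"
      using tree_edge_X0_X tree_edge_sym by simp_all
    with X_X show ?thesis
      unfolding sq_edge_def by force
  qed
  with X_X that show ?thesis by blast
next
  case (X0_Y b)
  with assms(1) have "tree_edge n m (X 0) (X b)" "tree_edge n m (X b) (Y b)"
    using tree_edge_X0_X tree_edge_X_Y by simp_all
  with X0_Y assms(1) have "sq_edge n m (X 0) (Y b)"
    unfolding sq_edge_def by force
  with X0_Y that show ?thesis by blast
next
  case (X_Y a)
  with assms(1) have "sq_edge n m (X a) (Y a)"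
    unfolding sq_edge_def using tree_edge_X_Y by simp
  with X_Y that show ?thesis by blast
qed

lemma edge_ideal_sq_eq:
  assumes "m \<le> n"
  shows "edge_ideal_sq n m = monideal n m (square_gens n m)"
proof -
  have "{edge_mono u v | u v. sq_edge n m u v} = square_gens n m"
  proof (intro set_eqI iffI)
    fix g assume "g \<in> {edge_mono u v | u v. sq_edge n m u v}"
    then show "g \<in> square_gens n m"
      using assms edge_mono_in_square_gens by blast
  next
    fix g assume "g \<in> square_gens n m"
    with assms obtain u v where "g = edge_mono u v" "sq_edge n m u v"
      by (rule square_gens_sq_edge)
    then show "g \<in> {edge_mono u v | u v. sq_edge n m u v}" by blast
  qed
  then show ?thesis
    unfolding edge_ideal_sq_def edge_mono_def by simp
qed

lemma min_gens_edge_ideal_sq: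
  assumes "m \<le> n"
  shows "min_gens (edge_ideal_sq n m) = square_gens n m"
  unfolding edge_ideal_sq_eq[OF assms]
proof (rule min_gens_monideal)
  show "square_gens n m \<subseteq> monoms n m"
    using assms by (auto elim: square_gens_edge_mono intro: edge_mono_in_monoms)
next
  fix g g' assume "g \<in> square_gens n m" "g' \<in> square_gens n m" "mdvd g' g"
  moreover obtain p q where "g = edge_mono p q" "p \<noteq> q"
    using assms \<open>g \<in> square_gens n m\<close> by (rule square_gens_edge_mono)
  moreover obtain p' q' where "g' = edge_mono p' q'" "p' \<noteq> q'"
    using assms \<open>g' \<in> square_gens n m\<close> by (rule square_gens_edge_mono)
  ultimately show "g' = g"
    using edge_mono_mdvd_edge_mono_imp_eq by blast
qed

subsection \<open>Colon ideals of the revlex-sorted generators\<close>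

lemma earlier_dvd_X_X_iff:
  assumes "m \<le> n" "a < b" "b \<le> n"
  shows "(\<exists>g\<in>square_gens n m. revlex_gt n m g (edge_mono (X a) (X b)) \<and>
            mdvd g (mmult w (edge_mono (X a) (X b))))
     \<longleftrightarrow> (\<exists>k<b. k \<noteq> a \<and> 1 \<le> w (X k))"
proof -
  have "(\<exists>g\<in>square_gens n m. revlex_gt n m g (edge_mono (X a) (X b)) \<and>
            mdvd g (mmult w (edge_mono (X a) (X b)))) \<longleftrightarrow>
        (\<exists>c d. c < d \<and> d \<le> n \<and> (d < b \<or> d = b \<and> c < a) \<and>
            (c = a \<or> c = b \<or> 1 \<le> w (X c)) \<and> (d = a \<or> d = b \<or> 1 \<le> w (X d)))"
    unfolding bex_square_gens_iff using assms
    by (simp add: revlex_gt_edge_mono_iff mdvd_edge_mono_mmult_iff cong: conj_cong)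
  also have "\<dots> \<longleftrightarrow> (\<exists>k<b. k \<noteq> a \<and> 1 \<le> w (X k))"
  proof
    assume "\<exists>c d. c < d \<and> d \<le> n \<and> (d < b \<or> d = b \<and> c < a) \<and>
            (c = a \<or> c = b \<or> 1 \<le> w (X c)) \<and> (d = a \<or> d = b \<or> 1 \<le> w (X d))"
    then obtain c d where "c < d" "d < b \<or> d = b \<and> c < a"
      and "c = a \<or> c = b \<or> 1 \<le> w (X c)" "d = a \<or> d = b \<or> 1 \<le> w (X d)"
      by blast
    then show "\<exists>k<b. k \<noteq> a \<and> 1 \<le> w (X k)"
      by (intro exI[of _ "if c = a then d else c"]) auto
  next
    assume "\<exists>k<b. k \<noteq> a \<and> 1 \<le> w (X k)"
    then obtain k where "k < b" "k \<noteq> a" "1 \<le> w (X k)"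
      by blast
    with assms show "\<exists>c d. c < d \<and> d \<le> n \<and> (d < b \<or> d = b \<and> c < a) \<and>
            (c = a \<or> c = b \<or> 1 \<le> w (X c)) \<and> (d = a \<or> d = b \<or> 1 \<le> w (X d))"
      by (intro exI[of _ "min a k"] exI[of _ "max a k"]) auto
  qed
  finally show ?thesis .
qed

lemma earlier_dvd_X0_Y_iff:
  assumes "m \<le> n" "1 \<le> b" "b \<le> m"
  shows "(\<exists>g\<in>square_gens n m. revlex_gt n m g (edge_mono (X 0) (Y b)) \<and>
            mdvd g (mmult w (edge_mono (X 0) (Y b))))
     \<longleftrightarrow> (\<exists>k. 1 \<le> k \<and> k \<le> n \<and> 1 \<le> w (X k)) \<or> (\<exists>k. 1 \<le> k \<and> k < b \<and> 1 \<le> w (Y k))"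
proof -
  have "(\<exists>g\<in>square_gens n m. revlex_gt n m g (edge_mono (X 0) (Y b)) \<and>
            mdvd g (mmult w (edge_mono (X 0) (Y b)))) \<longleftrightarrow>
        (\<exists>c d. c < d \<and> d \<le> n \<and> (c = 0 \<or> 1 \<le> w (X c)) \<and> 1 \<le> w (X d)) \<or>
        (\<exists>d. 1 \<le> d \<and> d \<le> m \<and> d < b \<and> 1 \<le> w (Y d)) \<or>
        (\<exists>c. 1 \<le> c \<and> c \<le> m \<and> c < b \<and> 1 \<le> w (X c) \<and> 1 \<le> w (Y c))"
    unfolding bex_square_gens_iff using assms
    by (simp add: revlex_gt_edge_mono_iff mdvd_edge_mono_mmult_iff cong: conj_cong)
  also have "\<dots> \<longleftrightarrow> (\<exists>k. 1 \<le> k \<and> k \<le> n \<and> 1 \<le> w (X k)) \<or> (\<exists>k. 1 \<le> k \<and> k < b \<and> 1 \<le> w (Y k))"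
    using assms by (auto 4 4 intro: exI[of _ 0])
  finally show ?thesis .
qed

lemma earlier_dvd_X_Y_iff:
  assumes "m \<le> n" "1 \<le> a" "a \<le> m"
  shows "(\<exists>g\<in>square_gens n m. revlex_gt n m g (edge_mono (X a) (Y a)) \<and>
            mdvd g (mmult w (edge_mono (X a) (Y a))))
     \<longleftrightarrow> (\<exists>k\<le>n. k \<noteq> a \<and> 1 \<le> w (X k))"
proof -
  have "(\<exists>g\<in>square_gens n m. revlex_gt n m g (edge_mono (X a) (Y a)) \<and>
            mdvd g (mmult w (edge_mono (X a) (Y a)))) \<longleftrightarrow>
        (\<exists>c d. c < d \<and> d \<le> n \<and> (c = a \<or> 1 \<le> w (X c)) \<and> (d = a \<or> 1 \<le> w (X d))) \<or>
        (\<exists>d. 1 \<le> d \<and> d \<le> m \<and> d \<le> a \<and> 1 \<le> w (X 0) \<and> (d = a \<or> 1 \<le> w (Y d))) \<or>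
        (\<exists>c. 1 \<le> c \<and> c \<le> m \<and> c < a \<and> 1 \<le> w (X c) \<and> 1 \<le> w (Y c))"
    unfolding bex_square_gens_iff using assms
    by (simp add: revlex_gt_edge_mono_iff mdvd_edge_mono_mmult_iff cong: conj_cong)
      (use le_eq_less_or_eq in auto)
  also have "\<dots> \<longleftrightarrow> (\<exists>k\<le>n. k \<noteq> a \<and> 1 \<le> w (X k))"
  proof
    assume "(\<exists>c d. c < d \<and> d \<le> n \<and> (c = a \<or> 1 \<le> w (X c)) \<and> (d = a \<or> 1 \<le> w (X d))) \<or>
        (\<exists>d. 1 \<le> d \<and> d \<le> m \<and> d \<le> a \<and> 1 \<le> w (X 0) \<and> (d = a \<or> 1 \<le> w (Y d))) \<or>
        (\<exists>c. 1 \<le> c \<and> c \<le> m \<and> c < a \<and> 1 \<le> w (X c) \<and> 1 \<le> w (Y c))"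
    then show "\<exists>k\<le>n. k \<noteq> a \<and> 1 \<le> w (X k)"
    proof (elim disjE exE)
      fix c d assume "c < d \<and> d \<le> n \<and> (c = a \<or> 1 \<le> w (X c)) \<and> (d = a \<or> 1 \<le> w (X d))"
      then show ?thesis
        by (intro exI[of _ "if c = a then d else c"]) auto
    next
      fix d assume "1 \<le> d \<and> d \<le> m \<and> d \<le> a \<and> 1 \<le> w (X 0) \<and> (d = a \<or> 1 \<le> w (Y d))"
      with assms show ?thesis
        by (intro exI[of _ 0]) auto
    next
      fix c assume "1 \<le> c \<and> c \<le> m \<and> c < a \<and> 1 \<le> w (X c) \<and> 1 \<le> w (Y c)"
      with assms show ?thesis
        by (intro exI[of _ c]) auto
    qed
  next
    assume "\<exists>k\<le>n. k \<noteq> a \<and> 1 \<le> w (X k)"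
    then obtain k where "k \<le> n" "k \<noteq> a" "1 \<le> w (X k)"
      by blast
    with assms show "(\<exists>c d. c < d \<and> d \<le> n \<and> (c = a \<or> 1 \<le> w (X c)) \<and> (d = a \<or> 1 \<le> w (X d))) \<or>
        (\<exists>d. 1 \<le> d \<and> d \<le> m \<and> d \<le> a \<and> 1 \<le> w (X 0) \<and> (d = a \<or> 1 \<le> w (Y d))) \<or>
        (\<exists>c. 1 \<le> c \<and> c \<le> m \<and> c < a \<and> 1 \<le> w (X c) \<and> 1 \<le> w (Y c))"
      by (intro disjI1 exI[of _ "min a k"] exI[of _ "max a k"]) auto
  qed
  finally show ?thesis .
qed

context
  fixes n m :: nat and us :: "monomial list"
  assumes m_le_n: "m \<le> n"
    and set_us: "set us = square_gens n m"
    and sorted_us: "sorted_wrt (revlex_gt n m) us"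
begin

lemma colon_prefix:
  assumes "i < length us"
  shows "colon n m (monideal n m (set (take i us))) (us ! i) =
    {w \<in> monoms n m. \<exists>g\<in>square_gens n m. revlex_gt n m g (us ! i) \<and> mdvd g (mmult w (us ! i))}"
proof -
  obtain p q where "us ! i = edge_mono p q" "p \<in> verts n m" "q \<in> verts n m"
    using m_le_n nth_mem[OF assms] set_us by (metis square_gens_edge_mono)
  then have "us ! i \<in> monoms n m"
    by (simp add: edge_mono_in_monoms)
  then show ?thesis
    using set_take_sorted_wrt[OF sorted_us assms revlex_gt_asym] set_us
    by (auto simp: colon_monideal)
qed

lemma colon_prefix_X_X:
  assumes "i < length us" "a < b" "b \<le> n" "us ! i = edge_mono (X a) (X b)"
  shows "colon n m (monideal n m (set (take i us))) (edge_mono (X a) (X b)) =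
    monideal n m (varmono ` {X k | k. k < b \<and> k \<noteq> a})"
  unfolding colon_prefix[OF assms(1), unfolded assms(4)] monideal_varmono_image
    earlier_dvd_X_X_iff[OF m_le_n assms(2,3)]
  by auto

lemma colon_prefix_X0_Y:
  assumes "i < length us" "1 \<le> b" "b \<le> m" "us ! i = edge_mono (X 0) (Y b)"
  shows "colon n m (monideal n m (set (take i us))) (edge_mono (X 0) (Y b)) =
    monideal n m (varmono ` ({X k | k. 1 \<le> k \<and> k \<le> n} \<union> {Y k | k. 1 \<le> k \<and> k < b}))"
  unfolding colon_prefix[OF assms(1), unfolded assms(4)] monideal_varmono_image
    earlier_dvd_X0_Y_iff[OF m_le_n assms(2,3)]
  by auto

lemma colon_prefix_X_Y:
  assumes "i < length us" "1 \<le> a" "a \<le> m" "us ! i = edge_mono (X a) (Y a)"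
  shows "colon n m (monideal n m (set (take i us))) (edge_mono (X a) (Y a)) =
    monideal n m (varmono ` {X k | k. k \<le> n \<and> k \<noteq> a})"
  unfolding colon_prefix[OF assms(1), unfolded assms(4)] monideal_varmono_image
    earlier_dvd_X_Y_iff[OF m_le_n assms(2,3)]
  by auto

lemma linear_quotients_sorted_square_gens: "linear_quotients n m us"
  unfolding linear_quotients_def
proof (intro allI impI)
  fix i assume i: "1 \<le> i \<and> i < length us"
  then have "us ! i \<in> square_gens n m"
    using set_us nth_mem by metis
  then show "\<exists>C\<subseteq>verts n m. colon n m (monideal n m (set (take i us))) (us ! i) = monideal n m (varmono ` C)"
  proof (cases rule: square_gens_cases)
    case (X_X a b)
    with i have "colon n m (monideal n m (set (take i us))) (us ! i) =
        monideal n m (varmono ` {X k | k. k < b \<and> k \<noteq> a})"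
      by (simp add: colon_prefix_X_X)
    moreover from X_X have "{X k | k. k < b \<and> k \<noteq> a} \<subseteq> verts n m"
      by auto
    ultimately show ?thesis by blast
  next
    case (X0_Y b)
    with i have "colon n m (monideal n m (set (take i us))) (us ! i) =
        monideal n m (varmono ` ({X k | k. 1 \<le> k \<and> k \<le> n} \<union> {Y k | k. 1 \<le> k \<and> k < b}))"
      by (simp add: colon_prefix_X0_Y)
    moreover from X0_Y have "{X k | k. 1 \<le> k \<and> k \<le> n} \<union> {Y k | k. 1 \<le> k \<and> k < b} \<subseteq> verts n m"
      by auto
    ultimately show ?thesis by blast
  next
    case (X_Y a)
    with i have "colon n m (monideal n m (set (take i us))) (us ! i) =
        monideal n m (varmono ` {X k | k. k \<le> n \<and> k \<noteq> a})"
      by (simp add: colon_prefix_X_Y)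
    moreover have "{X k | k. k \<le> n \<and> k \<noteq> a} \<subseteq> verts n m"
      by auto
    ultimately show ?thesis by blast
  qed
qed

end

theorem proposition3p2:
  fixes n m :: nat and us :: "monomial list"
  assumes "1 \<le> n" and "1 \<le> m" and "m \<le> n"
    and "set us = min_gens (edge_ideal_sq n m)"
    and "sorted_wrt (revlex_gt n m) us"
  shows "(\<forall>i. 1 \<le> i \<and> i < length us \<longrightarrow>
           (\<forall>a b. a < b \<and> b \<le> n \<and> us ! i = mmult (varmono (X a)) (varmono (X b)) \<longrightarrow>
              colon n m (monideal n m (set (take i us))) (us ! i)
                = monideal n m (varmono ` {X k | k. k < b \<and> k \<noteq> a})) \<and>
           (\<forall>b. 1 \<le> b \<and> b \<le> m \<and> us ! i = mmult (varmono (X 0)) (varmono (Y b)) \<longrightarrow>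
              colon n m (monideal n m (set (take i us))) (us ! i)
                = monideal n m (varmono ` ({X k | k. 1 \<le> k \<and> k \<le> n} \<union> {Y k | k. 1 \<le> k \<and> k < b}))) \<and>
           (\<forall>a. 1 \<le> a \<and> a \<le> m \<and> us ! i = mmult (varmono (X a)) (varmono (Y a)) \<longrightarrow>
              colon n m (monideal n m (set (take i us))) (us ! i)
                = monideal n m (varmono ` {X k | k. k \<le> n \<and> k \<noteq> a})))
         \<and> linear_quotients n m us"
proof -
  have set_us: "set us = square_gens n m"
    using assms(3,4) by (simp add: min_gens_edge_ideal_sq)
  note hyps = assms(3) set_us assms(5)
  show ?thesis
    unfolding edge_mono_def[symmetric]
    by (intro conjI allI impI linear_quotients_sorted_square_gens[OF hyps]; elim conjE)
      (simp_all add: colon_prefix_X_X[OF hyps] colon_prefix_X0_Y[OF hyps] colon_prefix_X_Y[OF hyps])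
qed

end
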